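(* Let $N\ge 1$, $M>N$, let $k_1<k_2<\dots<k_M$ be real numbers (generic), let $\theta_{01},\dots,\theta_{0M}$ be real constants and set $\theta_m=k_mx+k_m^2y+k_m^3t+\theta_{0m}$. Let $A=(a_{nm})$ be a real $N\times M$ matrix of rank $N$ all of whose nonzero $N\times N$ minors are positive, and let $$\tau(x,y,t)=\sum_{1\le m_1<\dots<m_N\le M} A(m_1,\dots,m_N)\,\exp[\theta(m_1,\dots,m_N)]\prod_{1\le s<r\le N}(k_{m_r}-k_{m_s}),$$ where $A(m_1,\dots,m_N)$ is the minor of $A$ on columns $m_1,\dots,m_N$ and $\theta(m_1,\dots,m_N)=\theta_{m_1}+\dots+\theta_{m_N}$. Let $u=2(\log\tau)_{xx}$. Fix $t$. Then, as $y\to\pm\infty$: (i) The dominant phase combinations of $\tau$ (the exponential terms of $\tau$ that dominate all others) in adjacent regions of the $xy$-plane have $N-1$ phases in common and differ by a single phase; the transition between two such dominant combinations $\theta(i,m_2,\dots,m_N)$ and $\theta(j,m_2,\dots,m_N)$ occurs along the line $L_{ij}:\theta_i=\theta_j$. (ii) Along such a transition line $L_{ij}$, $\tau(x,y,t)\sim C_i e^{\theta(i,m_2,\dots,m_N)}+C_j e^{\theta(j,m_2,\dots,m_N)}$, where the constants $C_i,C_j$ depend on $k_i,k_j,k_{m_2},\dots,k_{m_N}$ and on the minors $A(i,m_2,\dots,m_N)$, $A(j,m_2,\dots,m_N)$; consequently, in a neighborhood of $L_{ij}$, $$u(x,y,t)\sim \tfrac12(k_i-k_j)^2\,\mathrm{sech}^2\big[\tfrac12(\theta_i-\theta_j)\big],$$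 a traveling wave (asymptotic line soliton) with amplitude $|k_i-k_j|$ and direction $k_i+k_j$ (the slope of the normal to $L_{ij}$), which satisfies the dispersion relation $-4\omega l_x+l_x^4+3l_y^2=0$ with $l_x=k_i-k_j$, $l_y=k_i^2-k_j^2$, $\omega=k_i^3-k_j^3$.
   Context: This concerns the KPII equation $(-4u_t+u_{xxx}+6uu_x)_x+3u_{yy}=0$, solutions of which are given by $u=2(\log\tau)_{xx}$ with $\tau$ the Wronskian of $f_n=\sum_{m=1}^M a_{nm}e^{\theta_m}$, $n=1,\dots,N$; the displayed sum is the expansion of this Wronskian. Under the stated positivity assumptions $\tau>0$ everywhere and $u$ is a nonsingular solution. An asymptotic line soliton arising from the single-phase transition $i\to j$ is labeled by the index pair $[i,j]$. *)

theory Defs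
  imports Complex_Main "HOL-Analysis.Derivative" "Jordan_Normal_Form.Determinant" "Jordan_Normal_Form.DL_Rank"
    "Jordan_Normal_Form.DL_Submatrix"
begin

(* Conventions: columns / phases are indexed 0..M-1 (paper: 1..M), rows 0..N-1.
   A :: real mat with A \<in> carrier_mat N M.  k m, th0 m are the parameters k_m, theta_{0m}. *)

definition phase :: "(nat \<Rightarrow> real) \<Rightarrow> (nat \<Rightarrow> real) \<Rightarrow> nat \<Rightarrow> real \<Rightarrow> real \<Rightarrow> real \<Rightarrow> real" where
  "phase k th0 m x y t = k m * x + (k m)^2 * y + (k m)^3 * t + th0 m"

definition phaseS :: "(nat \<Rightarrow> real) \<Rightarrow> (nat \<Rightarrow> real) \<Rightarrow> nat set \<Rightarrow> real \<Rightarrow> real \<Rightarrow> real \<Rightarrow> real" where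
  "phaseS k th0 I x y t = (\<Sum>m\<in>I. phase k th0 m x y t)"

definition idx_sets :: "nat \<Rightarrow> nat \<Rightarrow> nat set set" where
  "idx_sets M N = {I. I \<subseteq> {..<M} \<and> card I = N}"

(* the maximal minor A(m_1,...,m_N): columns m_1<...<m_N, all rows (submatrix keeps order) *)
definition col_minor :: "real mat \<Rightarrow> nat set \<Rightarrow> real" where
  "col_minor A I = det (submatrix A UNIV I)"

definition vandermonde :: "(nat \<Rightarrow> real) \<Rightarrow> nat set \<Rightarrow> real" where
  "vandermonde k I = (\<Prod>p\<in>{(a,b). a \<in> I \<and> b \<in> I \<and> a < b}. k (snd p) - k (fst p))"

definition coeff :: "real mat \<Rightarrow> (nat \<Rightarrow> real) \<Rightarrow> nat set \<Rightarrow> real" where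
  "coeff A k I = col_minor A I * vandermonde k I"

definition tau :: "real mat \<Rightarrow> (nat \<Rightarrow> real) \<Rightarrow> (nat \<Rightarrow> real) \<Rightarrow> real \<Rightarrow> real \<Rightarrow> real \<Rightarrow> real" where
  "tau A k th0 x y t =
     (\<Sum>I\<in>idx_sets (dim_col A) (dim_row A). coeff A k I * exp (phaseS k th0 I x y t))"

definition kp_u :: "real mat \<Rightarrow> (nat \<Rightarrow> real) \<Rightarrow> (nat \<Rightarrow> real) \<Rightarrow> real \<Rightarrow> real \<Rightarrow> real \<Rightarrow> real" where
  "kp_u A k th0 x y t = 2 * deriv (\<lambda>x'. deriv (\<lambda>x''. ln (tau A k th0 x'' y t)) x') x"

definition dominant :: "real mat \<Rightarrow> (nat \<Rightarrow> real) \<Rightarrow> (nat \<Rightarrow> real) \<Rightarrow> real \<Rightarrow> real \<Rightarrow> real \<Rightarrow> nat set set" where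
  "dominant A k th0 x y t =
     {I \<in> idx_sets (dim_col A) (dim_row A). coeff A k I \<noteq> 0 \<and>
        (\<forall>J \<in> idx_sets (dim_col A) (dim_row A). coeff A k J \<noteq> 0 \<longrightarrow>
            phaseS k th0 J x y t \<le> phaseS k th0 I x y t)}"

(* the x-coordinate of the point at height y where theta_i - theta_j = s
   (s = 0: the line L_ij; s ranging over a bounded set: a neighbourhood of L_ij) *)
definition line_x :: "(nat \<Rightarrow> real) \<Rightarrow> (nat \<Rightarrow> real) \<Rightarrow> nat \<Rightarrow> nat \<Rightarrow> real \<Rightarrow> real \<Rightarrow> real \<Rightarrow> real" where
  "line_x k th0 i j s y t =
     (s - ((k i)^2 - (k j)^2) * y - ((k i)^3 - (k j)^3) * t - th0 i + th0 j) / (k i - k j)"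

end

theory Submission
  imports Defs
begin

(* Positivity of the minors makes every coefficient of tau nonnegative, and the index sets
   with nonzero coefficient are the bases of the column matroid of A.  Hence the dominant phase
   combinations at a point are exactly the bases of maximal weight for the weights theta_m.
   By basis exchange, two different maximal bases exist only if two weights tie, and then they
   differ by swapping the tied pair; three maximal bases would need two different ties.
   Genericity of the k_m makes two different ties theta_a = theta_b, theta_c = theta_d meet at
   a single height y, so for |y| large there is at most one tie anywhere on the horizontal line.

   Along L_ij every theta_m grows like y (k_m^2 - (k_i + k_j) k_m).  Applying the same exchange
   argument to these growth rates shows that insert i K and insert j K are the only fastest
   growing terms of tau.  So tau is asymptotically the sum of the two corresponding exponentials,
   whose quotient is exp (theta_i - theta_j), and u = 2 (log tau)_xx tends to the sech^2 profile. *)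

section \<open>Maximal minors\<close>

lemma card_insert_Diff_singleton:
  "finite Y \<Longrightarrow> y \<in> Y \<Longrightarrow> z \<notin> Y \<Longrightarrow> card (insert z (Y - {y})) = card Y"
  using card_Suc_Diff1[of Y y] by simp

lemma bij_betw_pick:
  assumes "finite I"
  shows "bij_betw (pick I) {..<card I} I"
proof -
  have "inj_on (pick I) {..<card I}"
  proof (rule inj_onI)
    fix a b assume "a \<in> {..<card I}" "b \<in> {..<card I}" "pick I a = pick I b"
    then show "a = b"
      using pick_mono[of a I b] pick_mono[of b I a] by (cases a b rule: linorder_cases) auto
  qed
  moreover have "pick I ` {..<card I} = I"
  proof
    show "pick I ` {..<card I} \<subseteq> I" using pick_in_set by blast
    show "I \<subseteq> pick I ` {..<card I}"
    proof
      fix m assume m: "m \<in> I"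
      have "card {a\<in>I. a < m} < card I"
        using m assms by (intro psubset_card_mono) auto
      then show "m \<in> pick I ` {..<card I}" using pick_card_in_set[OF m] by force
    qed
  qed
  ultimately show ?thesis unfolding bij_betw_def by blast
qed

definition pick_inv :: "nat set \<Rightarrow> nat \<Rightarrow> nat" where
  "pick_inv I m = card {a\<in>I. a < m}"

lemma pick_inv_pick: "j < card I \<Longrightarrow> pick_inv I (pick I j) = j"
  unfolding pick_inv_def using card_pick by blast

lemma pick_pick_inv: "m \<in> I \<Longrightarrow> pick I (pick_inv I m) = m"
  unfolding pick_inv_def by (rule pick_card_in_set)

lemma pick_inv_less_card: "finite I \<Longrightarrow> m \<in> I \<Longrightarrow> pick_inv I m < card I"
  unfolding pick_inv_def by (rule psubset_card_mono) blast+

lemma submatrix_cols_carrier: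
  assumes "I \<subseteq> {..<dim_col A}"
  shows "submatrix A UNIV I \<in> carrier_mat (dim_row A) (card I)"
proof (rule carrier_matI)
  have "{j. j < dim_col A \<and> j \<in> I} = I" using assms by blast
  then show "dim_col (submatrix A UNIV I) = card I" unfolding dim_submatrix by (rule arg_cong)
qed (simp add: dim_submatrix)

lemma submatrix_cols_mult_vec:
  fixes A :: "'a::comm_semiring_0 mat"
  assumes I: "I \<subseteq> {..<dim_col A}" and v: "v \<in> carrier_vec (card I)" and r: "r < dim_row A"
  shows "(submatrix A UNIV I *\<^sub>v v) $ r = (\<Sum>m\<in>I. v $ pick_inv I m * A $$ (r, m))"
proof -
  have S: "submatrix A UNIV I \<in> carrier_mat (dim_row A) (card I)"
    using I by (rule submatrix_cols_carrier)
  have "finite I" using I finite_subset by blast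
  have cols: "card {j. j < dim_col A \<and> j \<in> I} = card I"
    using S dim_submatrix(2)[of A UNIV I] by auto
  have "(submatrix A UNIV I *\<^sub>v v) $ r = (\<Sum>c<card I. submatrix A UNIV I $$ (r, c) * v $ c)"
    using S v r by (simp add: scalar_prod_def atLeast0LessThan)
  also have "\<dots> = (\<Sum>c<card I. v $ pick_inv I (pick I c) * A $$ (r, pick I c))"
  proof (rule sum.cong)
    fix c assume c: "c \<in> {..<card I}"
    have "submatrix A UNIV I $$ (r, c) = A $$ (pick UNIV r, pick I c)"
      using r c cols by (intro submatrix_index) simp_all
    then show "submatrix A UNIV I $$ (r, c) * v $ c = v $ pick_inv I (pick I c) * A $$ (r, pick I c)"
      using c by (simp add: pick_UNIV pick_inv_pick mult.commute)
  qed simp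
  also have "\<dots> = (\<Sum>m\<in>I. v $ pick_inv I m * A $$ (r, m))"
    using sum.reindex_bij_betw[OF bij_betw_pick[OF \<open>finite I\<close>]] .
  finally show ?thesis .
qed

definition lin_indep_cols :: "'a::field mat \<Rightarrow> nat set \<Rightarrow> bool" where
  "lin_indep_cols A I \<longleftrightarrow>
     (\<forall>c. (\<forall>r<dim_row A. (\<Sum>m\<in>I. c m * A $$ (r, m)) = 0) \<longrightarrow> (\<forall>m\<in>I. c m = 0))"

lemma lin_indep_colsD:
  "lin_indep_cols A I \<Longrightarrow> (\<And>r. r < dim_row A \<Longrightarrow> (\<Sum>m\<in>I. c m * A $$ (r, m)) = 0) \<Longrightarrow> m \<in> I
   \<Longrightarrow> c m = 0"
  unfolding lin_indep_cols_def by blast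

lemma submatrix_cols_mult_vec_eq_0_iff:
  fixes A :: "'a::comm_semiring_0 mat"
  assumes I: "I \<subseteq> {..<dim_col A}" and v: "v \<in> carrier_vec (card I)"
  shows "submatrix A UNIV I *\<^sub>v v = 0\<^sub>v (dim_row A) \<longleftrightarrow>
           (\<forall>r<dim_row A. (\<Sum>m\<in>I. v $ pick_inv I m * A $$ (r, m)) = 0)"
proof -
  have S: "submatrix A UNIV I \<in> carrier_mat (dim_row A) (card I)" by (rule submatrix_cols_carrier[OF I])
  then have "submatrix A UNIV I *\<^sub>v v \<in> carrier_vec (dim_row A)" using v by simp
  then show ?thesis using submatrix_cols_mult_vec[OF I v] S unfolding Matrix.vec_eq_iff by auto
qed

lemma det_submatrix_cols_nonzero_iff:
  fixes A :: "'a::field mat"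
  assumes I: "I \<subseteq> {..<dim_col A}" "card I = dim_row A"
  shows "det (submatrix A UNIV I) \<noteq> 0 \<longleftrightarrow> lin_indep_cols A I"
proof -
  let ?n = "dim_row A"
  have S: "submatrix A UNIV I \<in> carrier_mat ?n ?n"
    using submatrix_cols_carrier[OF I(1)] I(2) by simp
  have fI: "finite I" using I finite_subset by blast
  note null_iff = submatrix_cols_mult_vec_eq_0_iff[OF I(1), unfolded I(2)]
  show ?thesis
  proof
    assume det: "det (submatrix A UNIV I) \<noteq> 0"
    show "lin_indep_cols A I" unfolding lin_indep_cols_def
    proof (intro allI impI ballI)
      fix c m assume c: "\<forall>r<?n. (\<Sum>m\<in>I. c m * A $$ (r, m)) = 0" and m: "m \<in> I"
      define v where "v = vec ?n (\<lambda>j. c (pick I j))"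
      have v: "v \<in> carrier_vec ?n" unfolding v_def by simp
      have v_pick_inv: "v $ pick_inv I m' = c m'" if "m' \<in> I" for m'
        using pick_inv_less_card[OF fI that] pick_pick_inv[OF that] I(2) unfolding v_def by simp
      have "submatrix A UNIV I *\<^sub>v v = 0\<^sub>v ?n"
        unfolding null_iff[OF v] using c v_pick_inv by (metis (no_types, lifting) sum.cong)
      then have "v = 0\<^sub>v ?n" using det det_0_iff_vec_prod_zero_field[OF S] v by blast
      then show "c m = 0"
        using v_pick_inv[OF m] pick_inv_less_card[OF fI m] I(2) by simp
    qed
  next
    assume indep: "lin_indep_cols A I"
    show "det (submatrix A UNIV I) \<noteq> 0"
    proof
      assume "det (submatrix A UNIV I) = 0"
      then obtain v where v: "v \<in> carrier_vec ?n" "v \<noteq> 0\<^sub>v ?n" "submatrix A UNIV I *\<^sub>v v = 0\<^sub>v ?n"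
        using det_0_iff_vec_prod_zero_field[OF S] by blast
      have zero_at: "v $ pick_inv I m = 0" if "m \<in> I" for m
        using lin_indep_colsD[OF indep, of "\<lambda>m. v $ pick_inv I m"] v(3) that
        unfolding null_iff[OF v(1)] by blast
      have "v $ j = 0" if "j < ?n" for j
        using zero_at[OF pick_in_set[of j I]] pick_inv_pick[of j I] that I(2) by simp
      then show False using v(1,2) unfolding Matrix.vec_eq_iff by simp
    qed
  qed
qed

lemma nonzero_det_submatrix_cols_solvable:
  fixes A :: "'a::field mat"
  assumes I: "I \<subseteq> {..<dim_col A}" "card I = dim_row A" and det: "det (submatrix A UNIV I) \<noteq> 0"
  shows "\<exists>c. \<forall>r<dim_row A. (\<Sum>m\<in>I. c m * A $$ (r, m)) = b r"
proof -
  let ?n = "dim_row A"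
  have S: "submatrix A UNIV I \<in> carrier_mat ?n ?n"
    using submatrix_cols_carrier[OF I(1)] I(2) by simp
  obtain T where T: "T \<in> carrier_mat ?n ?n" "submatrix A UNIV I * T = 1\<^sub>m ?n"
    using det_non_zero_imp_unit[OF S det, of "()"] unfolding Units_def ring_mat_def by auto
  define v where "v = T *\<^sub>v vec ?n b"
  have v: "v \<in> carrier_vec (card I)" unfolding v_def using T I(2) by simp
  have Sv: "submatrix A UNIV I *\<^sub>v v = vec ?n b"
    unfolding v_def using assoc_mult_mat_vec[OF S T(1), of "vec ?n b"] T(2) by simp
  show ?thesis
  proof (intro exI allI impI)
    fix r assume r: "r < ?n"
    show "(\<Sum>m\<in>I. v $ pick_inv I m * A $$ (r, m)) = b r"
      using submatrix_cols_mult_vec[OF I(1) v r] r unfolding Sv by simp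
  qed
qed

lemma lin_indep_cols_exchange:
  assumes indep: "lin_indep_cols A J" and "finite J" and y: "y \<in> J" "c y \<noteq> 0" and z: "z \<notin> J"
    and repr: "\<And>r. r < dim_row A \<Longrightarrow> (\<Sum>m\<in>J. c m * A $$ (r, m)) = A $$ (r, z)"
  shows "lin_indep_cols A (insert z (J - {y}))"
  unfolding lin_indep_cols_def
proof (intro allI impI)
  fix f assume f: "\<forall>r<dim_row A. (\<Sum>m\<in>insert z (J - {y}). f m * A $$ (r, m)) = 0"
  define g where "g m = f z * c m + (if m = y then 0 else f m)" for m
  have "(\<Sum>m\<in>J. g m * A $$ (r, m)) = 0" if r: "r < dim_row A" for r
  proof -
    have "(\<Sum>m\<in>J. g m * A $$ (r, m))
        = (\<Sum>m\<in>J. f z * (c m * A $$ (r, m)) + (if m = y then 0 else f m * A $$ (r, m)))"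
      by (intro sum.cong) (simp_all add: g_def algebra_simps)
    also have "\<dots> = f z * (\<Sum>m\<in>J. c m * A $$ (r, m)) + (\<Sum>m\<in>J. if m = y then 0 else f m * A $$ (r, m))"
      by (simp only: sum.distrib sum_distrib_left)
    also have "(\<Sum>m\<in>J. if m = y then 0 else f m * A $$ (r, m)) = (\<Sum>m\<in>J - {y}. f m * A $$ (r, m))"
      using \<open>finite J\<close> y(1) by (intro sum.mono_neutral_cong_right) auto
    also have "f z * (\<Sum>m\<in>J. c m * A $$ (r, m)) + \<dots> = (\<Sum>m\<in>insert z (J - {y}). f m * A $$ (r, m))"
      using repr[OF r] \<open>finite J\<close> z by simp
    finally show ?thesis using f r by simp
  qed
  then have g0: "m \<in> J \<Longrightarrow> g m = 0" for m by (rule lin_indep_colsD[OF indep])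
  have fz: "f z = 0" using g0[OF y(1)] y(2) by (simp add: g_def)
  show "\<forall>m\<in>insert z (J - {y}). f m = 0"
  proof
    fix m assume "m \<in> insert z (J - {y})"
    then consider "m = z" | "m \<in> J" "m \<noteq> y" by blast
    then show "f m = 0"
      by cases (use fz g0[of m] in \<open>simp_all add: g_def\<close>)
  qed
qed

lemma lin_indep_cols_repr_outside:
  assumes indep: "lin_indep_cols A I" and "finite I" "finite J" and z: "z \<in> I" "z \<notin> J"
    and repr: "\<And>r. r < dim_row A \<Longrightarrow> (\<Sum>m\<in>J. c m * A $$ (r, m)) = A $$ (r, z)"
  shows "\<exists>y\<in>J - I. c y \<noteq> 0"
proof (rule ccontr)
  assume "\<not> (\<exists>y\<in>J - I. c y \<noteq> 0)"
  then have c0: "\<And>y. y \<in> J - I \<Longrightarrow> c y = 0" by blast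
  define d where "d m = (if m \<in> J then c m else 0) - (if m = z then 1 else 0)" for m
  have "(\<Sum>m\<in>I. d m * A $$ (r, m)) = 0" if r: "r < dim_row A" for r
  proof -
    have "(\<Sum>m\<in>J. c m * A $$ (r, m)) = (\<Sum>m\<in>I. (if m \<in> J then c m else 0) * A $$ (r, m))"
      using assms(2,3) c0 by (intro sum.mono_neutral_cong) simp_all
    then have "(\<Sum>m\<in>I. (if m \<in> J then c m else 0) * A $$ (r, m)) = A $$ (r, z)"
      using repr[OF r] by simp
    moreover have "(\<Sum>m\<in>I. d m * A $$ (r, m))
        = (\<Sum>m\<in>I. (if m \<in> J then c m else 0) * A $$ (r, m)) - (\<Sum>m\<in>I. if m = z then A $$ (r, m) else 0)"
      unfolding sum_subtractf[symmetric] by (intro sum.cong) (simp_all add: d_def left_diff_distrib)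
    ultimately show ?thesis using assms(2) z(1) by simp
  qed
  then have "d z = 0" using z(1) by (rule lin_indep_colsD[OF indep])
  then show False using z(2) by (simp add: d_def)
qed

lemma det_submatrix_cols_exchange:
  fixes A :: "'a::field mat"
  assumes I: "I \<subseteq> {..<dim_col A}" "card I = dim_row A" and J: "J \<subseteq> {..<dim_col A}" "card J = dim_row A"
    and dI: "det (submatrix A UNIV I) \<noteq> 0" and dJ: "det (submatrix A UNIV J) \<noteq> 0" and z: "z \<in> I - J"
  shows "\<exists>y\<in>J - I. det (submatrix A UNIV (insert z (J - {y}))) \<noteq> 0"
proof -
  have fin: "finite I" "finite J" using I J finite_subset by blast+
  obtain c where c: "\<And>r. r < dim_row A \<Longrightarrow> (\<Sum>m\<in>J. c m * A $$ (r, m)) = A $$ (r, z)"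
    using nonzero_det_submatrix_cols_solvable[OF J dJ, of "\<lambda>r. A $$ (r, z)"] by blast
  have indI: "lin_indep_cols A I" and indJ: "lin_indep_cols A J"
    using det_submatrix_cols_nonzero_iff I J dI dJ by blast+
  obtain y where y: "y \<in> J - I" "c y \<noteq> 0"
    using lin_indep_cols_repr_outside[OF indI fin, of z c] z c by blast
  let ?J' = "insert z (J - {y})"
  have "?J' \<subseteq> {..<dim_col A}" using I J z y by blast
  moreover have "card ?J' = dim_row A"
    using card_insert_Diff_singleton[OF fin(2)] J(2) y z by simp
  moreover have "lin_indep_cols A ?J'"
    using lin_indep_cols_exchange[OF indJ fin(2), of y c z] y z c by blast
  ultimately have "det (submatrix A UNIV ?J') \<noteq> 0" by (simp add: det_submatrix_cols_nonzero_iff)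
  then show ?thesis using y(1) by blast
qed

lemma (in vec_space) lin_indpt_cols_imp_lin_indep_cols:
  assumes A: "A \<in> carrier_mat n nc" and S: "S \<subseteq> set (cols A)" "lin_indpt S"
    and idx: "\<And>v. v \<in> S \<Longrightarrow> idx v < nc \<and> col A (idx v) = v"
  shows "lin_indep_cols A (idx ` S)"
  unfolding lin_indep_cols_def
proof (intro allI impI ballI)
  fix c m assume c: "\<forall>r<dim_row A. (\<Sum>m\<in>idx ` S. c m * A $$ (r, m)) = 0" and "m \<in> idx ` S"
  then obtain v where v: "v \<in> S" "m = idx v" by blast
  have fin_S: "finite S" using S(1) finite_subset by blast
  have S_carrier: "S \<subseteq> carrier_vec n" using S(1) A unfolding cols_def by auto
  have inj: "inj_on idx S" by (rule inj_onI) (metis idx)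
  have col_entry: "v $ r = A $$ (r, idx v)" if "v \<in> S" "r < n" for v r
    using idx[OF that(1)] that(2) A by (metis carrier_matD index_col)
  have "lincomb (c \<circ> idx) S = 0\<^sub>v n"
  proof (rule eq_vecI)
    fix r assume "r < dim_vec (0\<^sub>v n :: 'a vec)"
    then have r: "r < n" by simp
    have "lincomb (c \<circ> idx) S $ r = (\<Sum>v\<in>S. c (idx v) * A $$ (r, idx v))"
      unfolding lincomb_index[OF r S_carrier] using r by (intro sum.cong) (simp_all add: col_entry)
    also have "\<dots> = (\<Sum>m\<in>idx ` S. c m * A $$ (r, m))" by (simp add: sum.reindex[OF inj])
    finally show "lincomb (c \<circ> idx) S $ r = 0\<^sub>v n $ r" using c r A by simp
  qed (use lincomb_closed[OF S_carrier] in simp)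
  then have "c \<circ> idx \<in> S \<rightarrow> {\<zero>\<^bsub>class_ring\<^esub>}"
    using not_lindepD[OF S(2) fin_S subset_refl] by (simp add: class_ring_simps)
  then show "c m = 0" using v by (auto simp: class_ring_simps)
qed

lemma (in vec_space) full_rank_imp_lin_indep_cols:
  assumes A: "A \<in> carrier_mat n nc" and rk: "rank A = n"
  obtains J where "J \<subseteq> {..<nc}" "card J = n" "lin_indep_cols A J"
proof -
  obtain S where S: "maximal S (\<lambda>T. T \<subseteq> set (cols A) \<and> lin_indpt T)"
    using maximal_exists[of "\<lambda>T. T \<subseteq> set (cols A) \<and> lin_indpt T" "card (set (cols A))" "{}"]
    by (meson List.finite_set card_mono empty_iff empty_subsetI finite_lin_indpt2 rev_finite_subset)
  have card_S: "card S = n" using rank_card_indpt[OF A S] rk by simp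
  have S_cols: "S \<subseteq> set (cols A)" and S_indpt: "lin_indpt S" using S unfolding maximal_def by auto
  have "S \<subseteq> col A ` {..<nc}" using S_cols A unfolding cols_def by (simp add: lessThan_atLeast0)
  then have "\<forall>v\<in>S. \<exists>m. m < nc \<and> col A m = v" by blast
  then obtain idx where idx: "\<And>v. v \<in> S \<Longrightarrow> idx v < nc \<and> col A (idx v) = v" by metis
  have "inj_on idx S" by (rule inj_onI) (metis idx)
  then have "card (idx ` S) = n" using card_image card_S by metis
  moreover have "idx ` S \<subseteq> {..<nc}" using idx by auto
  moreover have "lin_indep_cols A (idx ` S)"
    using lin_indpt_cols_imp_lin_indep_cols[OF A S_cols S_indpt idx] .
  ultimately show ?thesis using that by blast
qed

lemma full_rank_imp_nonzero_minor:
  fixes A :: "'a::field mat"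
  assumes "A \<in> carrier_mat n nc" "vec_space.rank n A = n"
  obtains J where "J \<subseteq> {..<nc}" "card J = n" "det (submatrix A UNIV J) \<noteq> 0"
proof -
  obtain J where "J \<subseteq> {..<nc}" "card J = n" "lin_indep_cols A J"
    using vec_space.full_rank_imp_lin_indep_cols[OF assms] by blast
  then show ?thesis using that det_submatrix_cols_nonzero_iff[of J A] assms(1) by auto
qed

section \<open>Maximal-weight bases of an exchange family\<close>

definition max_weight :: "'a set set \<Rightarrow> ('a \<Rightarrow> 'b::ordered_comm_monoid_add) \<Rightarrow> 'a set \<Rightarrow> bool" where
  "max_weight Bs w X \<longleftrightarrow> X \<in> Bs \<and> (\<forall>Z\<in>Bs. sum w Z \<le> sum w X)"

definition at_most_one_tie :: "'a set \<Rightarrow> ('a \<Rightarrow> 'b) \<Rightarrow> bool" where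
  "at_most_one_tie U w \<longleftrightarrow>
     (\<forall>a\<in>U. \<forall>b\<in>U. \<forall>c\<in>U. \<forall>d\<in>U. a \<noteq> b \<longrightarrow> c \<noteq> d \<longrightarrow> w a = w b \<longrightarrow> w c = w d \<longrightarrow> {a, b} = {c, d})"

lemma at_most_one_tieD:
  "at_most_one_tie U w \<Longrightarrow> a \<in> U \<Longrightarrow> b \<in> U \<Longrightarrow> c \<in> U \<Longrightarrow> d \<in> U \<Longrightarrow> a \<noteq> b \<Longrightarrow> c \<noteq> d
   \<Longrightarrow> w a = w b \<Longrightarrow> w c = w d \<Longrightarrow> {a, b} = {c, d}"
  unfolding at_most_one_tie_def by blast

lemma at_most_one_tie_subset: "at_most_one_tie U w \<Longrightarrow> V \<subseteq> U \<Longrightarrow> at_most_one_tie V w"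
  unfolding at_most_one_tie_def by blast

lemma max_weight_exists:
  fixes w :: "'a \<Rightarrow> 'b::{ordered_comm_monoid_add, linorder}"
  assumes "finite Bs" "Bs \<noteq> {}"
  shows "\<exists>X. max_weight Bs w X"
proof -
  have "Max (sum w ` Bs) \<in> sum w ` Bs" using assms by simp
  then obtain X where "X \<in> Bs" "sum w X = Max (sum w ` Bs)" by (metis imageE)
  then have "max_weight Bs w X" unfolding max_weight_def using assms(1) by simp
  then show ?thesis ..
qed

locale basis_exchange =
  fixes Bs :: "'a set set"
  assumes exchange: "X \<in> Bs \<Longrightarrow> Y \<in> Bs \<Longrightarrow> z \<in> X - Y \<Longrightarrow> \<exists>y\<in>Y - X. insert z (Y - {y}) \<in> Bs"
    and finite_basis: "X \<in> Bs \<Longrightarrow> finite X"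
begin

context
  fixes w :: "'a \<Rightarrow> 'b::linordered_ab_group_add"
begin

lemma heaviest_in_sym_diff:
  assumes "max_weight Bs w X" "max_weight Bs w Y" "X \<noteq> Y"
  obtains z where "z \<in> sym_diff X Y" "\<And>d. d \<in> sym_diff X Y \<Longrightarrow> w d \<le> w z"
proof -
  have "finite (sym_diff X Y)" "sym_diff X Y \<noteq> {}"
    using assms finite_basis unfolding max_weight_def by auto
  then have "Max (w ` sym_diff X Y) \<in> w ` sym_diff X Y" by simp
  then obtain z where "z \<in> sym_diff X Y" "w z = Max (w ` sym_diff X Y)" by (metis imageE)
  then show ?thesis using that \<open>finite (sym_diff X Y)\<close> by simp
qed

lemma max_weight_exchange:
  assumes X: "max_weight Bs w X" and Y: "max_weight Bs w Y" and z: "z \<in> X - Y"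
    and z_max: "\<And>d. d \<in> sym_diff X Y \<Longrightarrow> w d \<le> w z"
  shows "\<exists>y\<in>Y - X. w y = w z \<and> max_weight Bs w (insert z (Y - {y}))"
proof -
  have XB: "X \<in> Bs" and YB: "Y \<in> Bs" using X Y unfolding max_weight_def by auto
  obtain y where y: "y \<in> Y - X" and Y': "insert z (Y - {y}) \<in> Bs"
    using exchange[OF XB YB z] by blast
  have swap: "sum w (insert z (Y - {y})) = sum w Y - w y + w z"
    using finite_basis[OF YB] y z by (simp add: sum_diff1)
  have "sum w (insert z (Y - {y})) \<le> sum w Y" using Y Y' unfolding max_weight_def by blast
  then have "w y = w z" using swap z_max[of y] y by simp
  moreover have "max_weight Bs w (insert z (Y - {y}))"
    using Y Y' swap \<open>w y = w z\<close> unfolding max_weight_def by simp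
  ultimately show ?thesis using y by blast
qed

lemma max_weight_tie_in_sym_diff:
  assumes "max_weight Bs w X" "max_weight Bs w Y" "X \<noteq> Y"
  obtains y z where "y \<in> sym_diff X Y" "z \<in> sym_diff X Y" "y \<noteq> z" "w y = w z"
proof -
  obtain z where z: "z \<in> sym_diff X Y" and z_max: "\<And>d. d \<in> sym_diff X Y \<Longrightarrow> w d \<le> w z"
    using heaviest_in_sym_diff[OF assms] by blast
  show ?thesis
  proof (cases "z \<in> X - Y")
    case True
    then show ?thesis using max_weight_exchange[OF assms(1,2) True z_max] that[of _ z] by blast
  next
    case False
    then have "z \<in> Y - X" using z by blast
    moreover have "\<And>d. d \<in> sym_diff Y X \<Longrightarrow> w d \<le> w z" using z_max by blast
    ultimately show ?thesis using max_weight_exchange[OF assms(2,1)] that[of _ z] by blast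
  qed
qed

context
  assumes one_tie: "at_most_one_tie (\<Union>Bs) w"
begin

lemma max_weight_eq_if_tie_outside:
  assumes X: "max_weight Bs w X" and Y: "max_weight Bs w Y"
    and yz: "y \<in> \<Union>Bs" "z \<in> \<Union>Bs" "y \<noteq> z" "w y = w z" "y \<notin> sym_diff X Y" "z \<notin> sym_diff X Y"
  shows "X = Y"
proof (rule ccontr)
  assume "X \<noteq> Y"
  then obtain y' z' where yz': "y' \<in> sym_diff X Y" "z' \<in> sym_diff X Y" "y' \<noteq> z'" "w y' = w z'"
    using max_weight_tie_in_sym_diff[OF X Y] by blast
  have "y' \<in> \<Union>Bs" "z' \<in> \<Union>Bs" using yz'(1,2) X Y unfolding max_weight_def by blast+
  then have "{y', z'} = {y, z}" by (rule at_most_one_tieD[OF one_tie _ _ yz(1,2) yz'(3) yz(3) yz'(4) yz(4)])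
  then show False using yz(5,6) yz'(1) unfolding doubleton_eq_iff by blast
qed

lemma max_weight_swap_heaviest:
  assumes X: "max_weight Bs w X" and Y: "max_weight Bs w Y" and z: "z \<in> X - Y"
    and z_max: "\<And>d. d \<in> sym_diff X Y \<Longrightarrow> w d \<le> w z"
  shows "\<exists>y\<in>Y - X. w y = w z \<and> X = insert z (Y - {y})"
proof -
  obtain y where y: "y \<in> Y - X" "w y = w z" and Y': "max_weight Bs w (insert z (Y - {y}))"
    using max_weight_exchange[OF X Y z z_max] by blast
  have "y \<in> \<Union>Bs" "z \<in> \<Union>Bs" using y z X Y unfolding max_weight_def by blast+
  moreover have "y \<noteq> z" using y z by blast
  moreover have "y \<notin> sym_diff X (insert z (Y - {y}))" "z \<notin> sym_diff X (insert z (Y - {y}))"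
    using y z by blast+
  ultimately show ?thesis using max_weight_eq_if_tie_outside[OF X Y'] y by blast
qed

lemma max_weight_swap:
  assumes X: "max_weight Bs w X" and Y: "max_weight Bs w Y" and "X \<noteq> Y"
  obtains a b where "a \<in> X - Y" "b \<in> Y - X" "w a = w b" "X = insert a (Y - {b})"
proof -
  obtain z where z: "z \<in> sym_diff X Y" and z_max: "\<And>d. d \<in> sym_diff X Y \<Longrightarrow> w d \<le> w z"
    using heaviest_in_sym_diff[OF assms] by blast
  show ?thesis
  proof (cases "z \<in> X - Y")
    case True
    obtain y where "y \<in> Y - X" "w y = w z" "X = insert z (Y - {y})"
      using max_weight_swap_heaviest[OF X Y True z_max] by blast
    from that[OF True this(1) this(2)[symmetric] this(3)] show ?thesis .
  next
    case False
    then have "z \<in> Y - X" using z by blast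
    moreover have "\<And>d. d \<in> sym_diff Y X \<Longrightarrow> w d \<le> w z" using z_max by blast
    ultimately obtain y where y: "y \<in> X - Y" "w y = w z" "Y = insert z (X - {y})"
      using max_weight_swap_heaviest[OF Y X] by blast
    then have "X = insert y (Y - {z})" using \<open>z \<in> Y - X\<close> by blast
    from that[OF y(1) \<open>z \<in> Y - X\<close> y(2) this] show ?thesis .
  qed
qed

lemma max_weight_at_most_two:
  assumes X: "max_weight Bs w X" and Y: "max_weight Bs w Y" and Z: "max_weight Bs w Z" and "X \<noteq> Y"
  shows "Z = X \<or> Z = Y"
proof (rule ccontr)
  assume "\<not> (Z = X \<or> Z = Y)"
  obtain a b where ab: "a \<in> X - Y" "b \<in> Y - X" "w a = w b" "X = insert a (Y - {b})"
    using max_weight_swap[OF X Y \<open>X \<noteq> Y\<close>] .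
  have "Z \<noteq> Y" using \<open>\<not> (Z = X \<or> Z = Y)\<close> by blast
  obtain c d where cd: "c \<in> Z - Y" "d \<in> Y - Z" "w c = w d" "Z = insert c (Y - {d})"
    using max_weight_swap[OF Z Y \<open>Z \<noteq> Y\<close>] .
  have "a \<in> \<Union>Bs" "b \<in> \<Union>Bs" "c \<in> \<Union>Bs" "d \<in> \<Union>Bs"
    using ab cd X Y Z unfolding max_weight_def by blast+
  moreover have "a \<noteq> b" "c \<noteq> d" using ab cd by blast+
  ultimately have "{a, b} = {c, d}" using ab(3) cd(3) by (intro at_most_one_tieD[OF one_tie])
  then have "a = c \<and> b = d" using ab(1) cd(2) unfolding doubleton_eq_iff by blast
  then show False using ab cd \<open>\<not> (Z = X \<or> Z = Y)\<close> by blast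
qed

end

end

end

section \<open>Phases, the lines \<open>L\<^sub>i\<^sub>j\<close> and the x-derivatives of \<open>\<tau>\<close>\<close>

lemma vandermonde_pos: "strict_mono_on I k \<Longrightarrow> vandermonde k I > 0"
  unfolding vandermonde_def by (rule prod_pos) (auto dest: strict_mono_onD)

lemma phase_diff_eq:
  assumes "k a \<noteq> k b"
  shows "phase k th0 a x y t - phase k th0 b x y t = (k a - k b) * (x - line_x k th0 a b s y t) + s"
  using assms unfolding phase_def line_x_def
  by (simp add: field_simps power2_eq_square power3_eq_cube)

lemma line_x_affine:
  assumes "k a \<noteq> k b"
  shows "line_x k th0 a b s y t = line_x k th0 a b s 0 t - (k a + k b) * y"
  using assms unfolding line_x_def by (simp add: field_simps power2_eq_square)

lemma tie_on_line_x:
  assumes "k a \<noteq> k b" "phase k th0 a x y t = phase k th0 b x y t"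
  shows "x = line_x k th0 a b 0 y t"
  using phase_diff_eq[OF assms(1), of th0 x y t 0] assms by simp

lemma double_tie_y:
  assumes "k a \<noteq> k b" "k c \<noteq> k d" "k a + k b \<noteq> k c + k d"
    and "phase k th0 a x y t = phase k th0 b x y t" "phase k th0 c x y t = phase k th0 d x y t"
  shows "y = (line_x k th0 a b 0 0 t - line_x k th0 c d 0 0 t) / (k a + k b - k c - k d)"
proof -
  have "line_x k th0 a b 0 y t = line_x k th0 c d 0 y t"
    using tie_on_line_x[OF assms(1,4)] tie_on_line_x[OF assms(2,5)] by simp
  then have "(k a + k b - k c - k d) * y = line_x k th0 a b 0 0 t - line_x k th0 c d 0 0 t"
    using line_x_affine[OF assms(1), of th0 0 y t] line_x_affine[OF assms(2), of th0 0 y t]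
    by (simp add: algebra_simps)
  then show ?thesis using assms(3) by (simp add: field_simps)
qed

lemma phase_along_line_x:
  assumes "k a \<noteq> k b"
  shows "phase k th0 m (line_x k th0 a b s y t) y t
           = phase k th0 m (line_x k th0 a b s 0 t) 0 t + y * (k m ^ 2 - (k a + k b) * k m)"
  unfolding phase_def line_x_affine[OF assms, of th0 s y t] by (simp add: algebra_simps)

lemma phaseS_along_line_x:
  assumes "k a \<noteq> k b"
  shows "phaseS k th0 L (line_x k th0 a b s y t) y t
           = phaseS k th0 L (line_x k th0 a b s 0 t) 0 t + y * (\<Sum>m\<in>L. k m ^ 2 - (k a + k b) * k m)"
proof -
  have "phaseS k th0 L (line_x k th0 a b s y t) y t
      = (\<Sum>m\<in>L. phase k th0 m (line_x k th0 a b s 0 t) 0 t + y * (k m ^ 2 - (k a + k b) * k m))"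
    unfolding phaseS_def using phase_along_line_x[OF assms] by (rule sum.cong[OF refl])
  then show ?thesis by (simp add: phaseS_def sum.distrib sum_distrib_left)
qed

lemma eventually_ne_if_scaled_at_top:
  fixes \<sigma> :: real
  assumes "filterlim (\<lambda>y. \<sigma> * y) at_top F"
  shows "\<forall>\<^sub>F y in F. y \<noteq> v"
proof -
  have "\<forall>\<^sub>F y in F. \<sigma> * v < \<sigma> * y" using assms unfolding filterlim_at_top_dense by blast
  then show ?thesis by eventually_elim auto
qed

lemma scaled_at_top_or_at_bot:
  assumes "F \<in> {at_top, at_bot}"
  obtains \<sigma> :: real where "filterlim (\<lambda>y. \<sigma> * y) at_top F" "\<sigma> * \<sigma> = 1"
proof (cases "F = at_top")
  case True
  then show ?thesis using that[of 1] by (simp add: filterlim_ident)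
next
  case False
  then have "F = at_bot" using assms by blast
  then show ?thesis using that[of "-1"] by (simp add: filterlim_uminus_at_top_at_bot)
qed

definition tau_dx :: "real mat \<Rightarrow> (nat \<Rightarrow> real) \<Rightarrow> (nat \<Rightarrow> real) \<Rightarrow> nat \<Rightarrow> real \<Rightarrow> real \<Rightarrow> real \<Rightarrow> real" where
  "tau_dx A k th0 n x y t =
     (\<Sum>I\<in>idx_sets (dim_col A) (dim_row A). coeff A k I * sum k I ^ n * exp (phaseS k th0 I x y t))"

lemma tau_dx_0: "tau_dx A k th0 0 x y t = tau A k th0 x y t"
  unfolding tau_dx_def tau_def by simp

lemma has_real_derivative_exp_phaseS:
  "((\<lambda>x. exp (phaseS k th0 I x y t)) has_real_derivative sum k I * exp (phaseS k th0 I x y t)) (at x)"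
proof -
  have "((\<lambda>x. phaseS k th0 I x y t) has_real_derivative sum k I) (at x)"
    unfolding phaseS_def phase_def by (intro DERIV_sum) (auto intro!: derivative_eq_intros)
  from DERIV_fun_exp[OF this] show ?thesis by (simp add: mult.commute)
qed

lemma has_real_derivative_tau_dx:
  "((\<lambda>x. tau_dx A k th0 n x y t) has_real_derivative tau_dx A k th0 (Suc n) x y t) (at x)"
proof -
  have "((\<lambda>x. tau_dx A k th0 n x y t) has_real_derivative
      (\<Sum>I\<in>idx_sets (dim_col A) (dim_row A). coeff A k I * sum k I ^ n * (sum k I * exp (phaseS k th0 I x y t)))) (at x)"
    unfolding tau_dx_def by (intro DERIV_sum DERIV_cmult has_real_derivative_exp_phaseS)
  then show ?thesis unfolding tau_dx_def by (simp add: algebra_simps)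
qed

lemma kp_u_eq_tau_dx:
  assumes pos: "\<And>x. tau A k th0 x y t > 0"
  shows "kp_u A k th0 x y t = 2 * (tau_dx A k th0 2 x y t / tau_dx A k th0 0 x y t
                                  - (tau_dx A k th0 1 x y t / tau_dx A k th0 0 x y t)^2)"
proof -
  let ?T = "\<lambda>n x. tau_dx A k th0 n x y t"
  have T0_pos: "?T 0 x > 0" for x using pos by (simp add: tau_dx_0)
  have "deriv (\<lambda>x. ln (tau A k th0 x y t)) = (\<lambda>x. ?T 1 x / ?T 0 x)"
  proof (rule ext, rule DERIV_imp_deriv)
    fix x'
    show "((\<lambda>x. ln (tau A k th0 x y t)) has_real_derivative ?T 1 x' / ?T 0 x') (at x')"
      using DERIV_chain2[OF DERIV_ln_divide[OF T0_pos] has_real_derivative_tau_dx[of A k th0 0]]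
      by (simp add: tau_dx_0)
  qed
  moreover have "((\<lambda>x. ?T 1 x / ?T 0 x) has_real_derivative
      ?T 2 x / ?T 0 x - (?T 1 x / ?T 0 x)^2) (at x)"
  proof -
    have "?T 0 x \<noteq> 0" using T0_pos[of x] by simp
    from DERIV_divide[OF has_real_derivative_tau_dx has_real_derivative_tau_dx this]
    show ?thesis using \<open>?T 0 x \<noteq> 0\<close>
      by (simp add: numeral_2_eq_2 field_simps power2_eq_square)
  qed
  ultimately show ?thesis unfolding kp_u_def by (simp add: DERIV_imp_deriv del: One_nat_def)
qed

lemma exp_scaled_tendsto_0:
  fixes \<sigma> d :: real
  assumes "filterlim (\<lambda>y. \<sigma> * y) at_top F" "\<sigma> * \<sigma> = 1" "\<sigma> * d < 0"
  shows "((\<lambda>y. exp (y * d)) \<longlongrightarrow> 0) F"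
proof -
  have "filterlim (\<lambda>y. (\<sigma> * d) * (\<sigma> * y)) at_bot F"
    by (rule filterlim_tendsto_neg_mult_at_bot[OF tendsto_const assms(3,1)])
  moreover have "(\<sigma> * d) * (\<sigma> * y) = y * d" for y
    using assms(2) by (metis mult.assoc mult.commute mult.left_neutral)
  ultimately have "filterlim (\<lambda>y. y * d) at_bot F" by simp
  then show ?thesis by (rule filterlim_compose[OF exp_at_bot])
qed

lemma cosh_half_ln_sq:
  fixes q :: real
  assumes "q > 0"
  shows "(cosh ((1/2) * ln q))^2 = (q + 2 + 1 / q) / 4"
proof -
  have "cosh (ln q) = 2 * (cosh ((1/2) * ln q))^2 - 1"
    using cosh_double_cosh[of "(1/2) * ln q"] by simp
  then show ?thesis using cosh_ln_real[OF assms] by (simp add: field_simps)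
qed

text \<open>The left-hand side is \<open>2 (log (r\<^sub>1 e\<^sup>a\<^sup>x + r\<^sub>2 e\<^sup>b\<^sup>x))''\<close> at \<open>x = 0\<close>.\<close>

lemma two_exp_mix_sech_sq:
  fixes r1 r2 a b :: real
  assumes "r1 > 0" "r2 > 0"
  shows "2 * ((r1 * a^2 + r2 * b^2) / (r1 + r2) - ((r1 * a + r2 * b) / (r1 + r2))^2)
         = (1/2) * (a - b)^2 / (cosh ((1/2) * ln (r1 / r2)))^2"
proof -
  have "(cosh ((1/2) * ln (r1 / r2)))^2 = (r1 / r2 + 2 + 1 / (r1 / r2)) / 4"
    using assms by (intro cosh_half_ln_sq) simp
  also have "\<dots> = (r1 + r2)^2 / (4 * r1 * r2)"
    using assms by (simp add: field_simps power2_eq_square)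
  finally have cosh_sq: "(cosh ((1/2) * ln (r1 / r2)))^2 = (r1 + r2)^2 / (4 * r1 * r2)" .
  have nz: "r1 + r2 \<noteq> 0" using assms by simp
  have "(r1 * a^2 + r2 * b^2) * (r1 + r2) - (r1 * a + r2 * b)^2 = r1 * r2 * (a - b)^2"
    by (simp add: power2_eq_square algebra_simps)
  moreover have "X / D - (Y / D)^2 = (X * D - Y^2) / D^2" if "D \<noteq> 0" for X Y D :: real
    using that by (simp add: field_simps power2_eq_square)
  ultimately have variance: "(r1 * a^2 + r2 * b^2) / (r1 + r2) - ((r1 * a + r2 * b) / (r1 + r2))^2
      = r1 * r2 * (a - b)^2 / (r1 + r2)^2"
    using nz by simp
  have "(1/2) * (a - b)^2 / ((r1 + r2)^2 / (4 * r1 * r2)) = 2 * (r1 * r2 * (a - b)^2 / (r1 + r2)^2)"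
    using assms nz by (simp add: field_simps)
  then show ?thesis unfolding cosh_sq variance by simp
qed

lemma dispersion_relation:
  fixes a b :: real
  shows "let lx = a - b; ly = a^2 - b^2; \<omega> = a^3 - b^3 in -4 * \<omega> * lx + lx^4 + 3 * ly^2 = 0"
  unfolding Let_def by (simp add: eval_nat_numeral algebra_simps)

section \<open>Dominant phase combinations\<close>

locale kp_setting =
  fixes N M :: nat and k th0 :: "nat \<Rightarrow> real" and A :: "real mat" and t :: real
  assumes k_incr: "\<And>a b. a < b \<Longrightarrow> b < M \<Longrightarrow> k a < k b"
    and k_generic: "\<And>a b c d. a < M \<Longrightarrow> b < M \<Longrightarrow> c < M \<Longrightarrow> d < M \<Longrightarrow> a < b \<Longrightarrow> c < d
                      \<Longrightarrow> (a, b) \<noteq> (c, d) \<Longrightarrow> k a + k b \<noteq> k c + k d"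
    and A_dim: "A \<in> carrier_mat N M"
    and A_rank: "vec_space.rank N A = N"
    and A_pos: "\<And>I. I \<in> idx_sets M N \<Longrightarrow> col_minor A I \<noteq> 0 \<Longrightarrow> col_minor A I > 0"
begin

definition tau_support :: "nat set set" where
  "tau_support = {I \<in> idx_sets M N. coeff A k I \<noteq> 0}"

lemma dim_A: "dim_row A = N" "dim_col A = M"
  using A_dim by auto

lemma k_neq: "a < M \<Longrightarrow> b < M \<Longrightarrow> a \<noteq> b \<Longrightarrow> k a \<noteq> k b"
  using k_incr by (metis less_irrefl nat_neq_iff)

lemma k_sum_neq:
  assumes "a < M" "b < M" "c < M" "d < M" "a \<noteq> b" "c \<noteq> d" "{a, b} \<noteq> {c, d}"
  shows "k a + k b \<noteq> k c + k d"
proof -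
  have sorted: "k a + k b = k (min a b) + k (max a b)" "{a, b} = {min a b, max a b}" for a b
    by (cases "a \<le> b"; simp add: min_def max_def add.commute insert_commute)+
  have "(min a b, max a b) \<noteq> (min c d, max c d)" using assms(7) sorted(2)[of a b] sorted(2)[of c d] by auto
  moreover have "min a b < max a b" "min c d < max c d" using assms(5,6) by auto
  ultimately have "k (min a b) + k (max a b) \<noteq> k (min c d) + k (max c d)"
    using assms(1-4) by (intro k_generic) (simp_all add: min_def max_def)
  then show ?thesis using sorted(1) by metis
qed

lemma finite_idx_sets: "finite (idx_sets M N)"
proof (rule finite_subset)
  show "idx_sets M N \<subseteq> Pow {..<M}" unfolding idx_sets_def by blast
qed simp

lemma finite_tau_support: "finite tau_support"
  unfolding tau_support_def using finite_idx_sets by simp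

lemma tau_support_subset: "I \<in> tau_support \<Longrightarrow> I \<subseteq> {..<M}"
  unfolding tau_support_def idx_sets_def by simp

lemma vandermonde_idx_pos: "I \<in> idx_sets M N \<Longrightarrow> vandermonde k I > 0"
  unfolding idx_sets_def by (intro vandermonde_pos strict_mono_onI k_incr) auto

lemma mem_tau_support_iff: "I \<in> tau_support \<longleftrightarrow> I \<in> idx_sets M N \<and> col_minor A I \<noteq> 0"
proof -
  have "I \<in> idx_sets M N \<Longrightarrow> vandermonde k I \<noteq> 0" using vandermonde_idx_pos by fastforce
  then show ?thesis unfolding tau_support_def coeff_def by auto
qed

lemma coeff_nonneg: "I \<in> idx_sets M N \<Longrightarrow> coeff A k I \<ge> 0"
  unfolding coeff_def using A_pos[of I] vandermonde_idx_pos[of I]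
  by (metis less_eq_real_def mult_nonneg_nonneg)

lemma coeff_pos: "I \<in> tau_support \<Longrightarrow> coeff A k I > 0"
  unfolding tau_support_def using coeff_nonneg by (simp add: order_less_le)

lemma tau_support_nonempty: "tau_support \<noteq> {}"
proof -
  obtain J where "J \<subseteq> {..<M}" "card J = N" "det (submatrix A UNIV J) \<noteq> 0"
    using full_rank_imp_nonzero_minor[OF A_dim A_rank] by blast
  then have "J \<in> tau_support" unfolding mem_tau_support_iff idx_sets_def col_minor_def by simp
  then show ?thesis by blast
qed

sublocale basis_exchange tau_support
proof
  fix X Y z assume X: "X \<in> tau_support" and Y: "Y \<in> tau_support" and z: "z \<in> X - Y"
  have X': "X \<subseteq> {..<dim_col A}" "card X = dim_row A" "det (submatrix A UNIV X) \<noteq> 0"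
    and Y': "Y \<subseteq> {..<dim_col A}" "card Y = dim_row A" "det (submatrix A UNIV Y) \<noteq> 0"
    using X Y dim_A unfolding mem_tau_support_iff idx_sets_def col_minor_def by auto
  obtain y where y: "y \<in> Y - X" and det: "det (submatrix A UNIV (insert z (Y - {y}))) \<noteq> 0"
    using det_submatrix_cols_exchange[OF X'(1,2) Y'(1,2) X'(3) Y'(3) z] by blast
  have "finite Y" using Y'(1) finite_subset by blast
  then have "card (insert z (Y - {y})) = card Y"
    using y z by (intro card_insert_Diff_singleton) auto
  then have "card (insert z (Y - {y})) = N" using Y'(2) dim_A by simp
  moreover have "insert z (Y - {y}) \<subseteq> {..<M}" using X'(1) Y'(1) z dim_A by blast
  ultimately have "insert z (Y - {y}) \<in> tau_support"
    using det unfolding mem_tau_support_iff idx_sets_def col_minor_def by simp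
  then show "\<exists>y\<in>Y - X. insert z (Y - {y}) \<in> tau_support" using y by blast
next
  fix X assume "X \<in> tau_support"
  then show "finite X" using tau_support_subset finite_subset by blast
qed

lemma dominant_eq_max_weight:
  "dominant A k th0 x y t = {I. max_weight tau_support (\<lambda>m. phase k th0 m x y t) I}"
  unfolding dominant_def max_weight_def phaseS_def dim_A tau_support_def by blast

lemma dominant_single_or_swap:
  assumes one_tie: "at_most_one_tie {..<M} (\<lambda>m. phase k th0 m x y t)"
  shows "card (dominant A k th0 x y t) = 1 \<or>
    (\<exists>K i j. i \<noteq> j \<and> i \<notin> K \<and> j \<notin> K \<and> dominant A k th0 x y t = {insert i K, insert j K} \<and>
       phase k th0 i x y t = phase k th0 j x y t)"
proof -
  let ?w = "\<lambda>m. phase k th0 m x y t"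
  have "\<Union>tau_support \<subseteq> {..<M}" using tau_support_subset by blast
  then have tie: "at_most_one_tie (\<Union>tau_support) ?w" by (rule at_most_one_tie_subset[OF one_tie])
  obtain I where I: "max_weight tau_support ?w I"
    using max_weight_exists[OF finite_tau_support tau_support_nonempty] by blast
  show ?thesis
  proof (cases "\<exists>J. max_weight tau_support ?w J \<and> J \<noteq> I")
    case False
    then have "dominant A k th0 x y t = {I}" using I unfolding dominant_eq_max_weight by blast
    then show ?thesis by simp
  next
    case True
    then obtain J where J: "max_weight tau_support ?w J" "I \<noteq> J" by blast
    obtain a b where ab: "a \<in> I - J" "b \<in> J - I" "?w a = ?w b" "I = insert a (J - {b})"
      using max_weight_swap[OF tie I J] .
    have "dominant A k th0 x y t = {I, J}"
      using max_weight_at_most_two[OF tie I J(1) _ J(2)] I J(1) unfolding dominant_eq_max_weight by blast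
    moreover have "J = insert b (J - {b})" using ab(2) by blast
    ultimately have "dominant A k th0 x y t = {insert a (J - {b}), insert b (J - {b})}"
      using ab(4) by simp
    moreover have "a \<noteq> b" "a \<notin> J - {b}" "b \<notin> J - {b}" using ab(1,2) by blast+
    ultimately show ?thesis
      using ab(3) by (intro disjI2 exI[of _ "J - {b}"] exI[of _ a] exI[of _ b]) simp
  qed
qed

lemma eventually_at_most_one_tie:
  assumes ne: "\<And>v. \<forall>\<^sub>F y in F. y \<noteq> v"
  shows "\<forall>\<^sub>F y in F. \<forall>x. at_most_one_tie {..<M} (\<lambda>m. phase k th0 m x y t)"
proof -
  define Q :: "(nat \<times> nat \<times> nat \<times> nat) set" where
    "Q = {(a, b, c, d). a < M \<and> b < M \<and> c < M \<and> d < M \<and> a \<noteq> b \<and> c \<noteq> d \<and> {a, b} \<noteq> {c, d}}"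
  define crossing :: "nat \<times> nat \<times> nat \<times> nat \<Rightarrow> real" where
    "crossing = (\<lambda>(a, b, c, d). (line_x k th0 a b 0 0 t - line_x k th0 c d 0 0 t) / (k a + k b - k c - k d))"
  have "Q \<subseteq> {..<M} \<times> {..<M} \<times> {..<M} \<times> {..<M}" unfolding Q_def by auto
  then have "finite Q" by (rule finite_subset) simp
  then have "\<forall>\<^sub>F y in F. \<forall>q\<in>Q. y \<noteq> crossing q" by (rule eventually_ball_finite) (use ne in blast)
  then show ?thesis
  proof eventually_elim
    case (elim y)
    show ?case unfolding at_most_one_tie_def
    proof (intro allI ballI impI)
      fix x a b c d
      assume abcd: "a \<in> {..<M}" "b \<in> {..<M}" "c \<in> {..<M}" "d \<in> {..<M}" "a \<noteq> b" "c \<noteq> d"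
        and ties: "phase k th0 a x y t = phase k th0 b x y t" "phase k th0 c x y t = phase k th0 d x y t"
      show "{a, b} = {c, d}"
      proof (rule ccontr)
        assume "{a, b} \<noteq> {c, d}"
        then have Q: "(a, b, c, d) \<in> Q" unfolding Q_def using abcd by simp
        have "k a \<noteq> k b" "k c \<noteq> k d" using abcd by (simp_all add: k_neq)
        moreover have "k a + k b \<noteq> k c + k d"
          using abcd \<open>{a, b} \<noteq> {c, d}\<close> by (intro k_sum_neq) simp_all
        ultimately have "y = crossing (a, b, c, d)"
          unfolding crossing_def using double_tie_y ties by simp
        then show False using elim Q by blast
      qed
    qed
  qed
qed

lemma eventually_dominant_single_or_swap:
  assumes "\<And>v. \<forall>\<^sub>F y in F. y \<noteq> v"
  shows "\<forall>\<^sub>F y in F. \<forall>x. card (dominant A k th0 x y t) = 1 \<or>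
    (\<exists>K i j. i \<noteq> j \<and> i \<notin> K \<and> j \<notin> K \<and> dominant A k th0 x y t = {insert i K, insert j K} \<and>
       phase k th0 i x y t = phase k th0 j x y t)"
  using eventually_at_most_one_tie[OF assms] by eventually_elim (use dominant_single_or_swap in blast)

lemma tau_eq_sum_support:
  "tau A k th0 x y t = (\<Sum>I\<in>tau_support. coeff A k I * exp (phaseS k th0 I x y t))"
  unfolding tau_def dim_A tau_support_def using finite_idx_sets
  by (intro sum.mono_neutral_right) auto

lemma tau_pos: "tau A k th0 x y t > 0"
  unfolding tau_eq_sum_support using finite_tau_support tau_support_nonempty coeff_pos
  by (intro sum_pos) auto

end

section \<open>Asymptotics along a transition line\<close>

text \<open>The sign \<open>\<sigma> \<in> {1, -1}\<close> treats \<open>y \<rightarrow> \<infinity>\<close> and \<open>y \<rightarrow> -\<infinity>\<close> at once: in both cases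
  \<open>F\<close> is the filter along which \<open>\<sigma> * y \<rightarrow> \<infinity>\<close>.\<close>

locale soliton_line = kp_setting +
  fixes \<sigma> :: real and F :: "real filter" and K :: "nat set" and i j :: nat
  assumes scaled: "filterlim (\<lambda>y. \<sigma> * y) at_top F" and sign: "\<sigma> * \<sigma> = 1"
    and i_lt: "i < M" and j_lt: "j < M" and i_neq_j: "i \<noteq> j" and i_notin: "i \<notin> K" and j_notin: "j \<notin> K"
    and iK_idx: "insert i K \<in> idx_sets M N"
    and frequently_dominant: "\<exists>\<^sub>F y in F. \<exists>x. dominant A k th0 x y t = {insert i K, insert j K}"
begin

abbreviation "Ki \<equiv> insert i K"
abbreviation "Kj \<equiv> insert j K"
abbreviation xline :: "real \<Rightarrow> real \<Rightarrow> real" where "xline s y \<equiv> line_x k th0 i j s y t"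

text \<open>Along \<open>L\<^sub>i\<^sub>j\<close> every phase is affine in \<open>y\<close>, with slope \<open>rate m\<close>.\<close>
definition rate :: "nat \<Rightarrow> real" where "rate m = k m ^ 2 - (k i + k j) * k m"

lemma k_ij: "k i \<noteq> k j"
  using k_neq i_lt j_lt i_neq_j by blast

lemma finite_K: "finite K"
  using iK_idx finite_subset unfolding idx_sets_def by auto

lemma sum_Ki: "sum f Ki = f i + sum f K" and sum_Kj: "sum f Kj = f j + sum f K"
  using finite_K i_notin j_notin by simp_all

lemma Ki_neq_Kj: "Ki \<noteq> Kj"
  using i_neq_j i_notin by blast

lemma Ki_Kj_max_weight_at:
  assumes "dominant A k th0 x y t = {Ki, Kj}"
  shows "max_weight tau_support (\<lambda>m. phase k th0 m x y t) Ki"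
    and "max_weight tau_support (\<lambda>m. phase k th0 m x y t) Kj"
  using assms unfolding dominant_eq_max_weight by blast+

lemma Ki_Kj_support: "Ki \<in> tau_support" "Kj \<in> tau_support"
proof -
  obtain y where "\<exists>x. dominant A k th0 x y t = {Ki, Kj}" using frequently_ex[OF frequently_dominant] ..
  then obtain x where "dominant A k th0 x y t = {Ki, Kj}" ..
  then have "max_weight tau_support (\<lambda>m. phase k th0 m x y t) Ki"
    "max_weight tau_support (\<lambda>m. phase k th0 m x y t) Kj"
    by (rule Ki_Kj_max_weight_at)+
  then show "Ki \<in> tau_support" "Kj \<in> tau_support" unfolding max_weight_def by blast+
qed

lemma sum_rate_Kj: "sum rate Kj = sum rate Ki"
  unfolding sum_Ki sum_Kj rate_def by (simp add: algebra_simps power2_eq_square)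

lemma phaseS_xline: "phaseS k th0 L (xline s y) y t = phaseS k th0 L (xline s 0) 0 t + y * sum rate L"
  unfolding rate_def using phaseS_along_line_x[OF k_ij] .

lemma phaseS_diff_xline: "phaseS k th0 Ki (xline s 0) 0 t - phaseS k th0 Kj (xline s 0) 0 t = s"
  unfolding phaseS_def sum_Ki sum_Kj using phase_diff_eq[OF k_ij, of th0 "xline s 0" 0 t s] by simp

lemma dominant_on_xline: "dominant A k th0 x y t = {Ki, Kj} \<Longrightarrow> x = xline 0 y"
proof -
  assume D: "dominant A k th0 x y t = {Ki, Kj}"
  let ?w = "\<lambda>m. phase k th0 m x y t"
  have "sum ?w Kj \<le> sum ?w Ki" "sum ?w Ki \<le> sum ?w Kj"
    using Ki_Kj_max_weight_at[OF D] Ki_Kj_support unfolding max_weight_def by blast+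
  then have "?w i = ?w j" unfolding sum_Ki sum_Kj by simp
  then show "x = xline 0 y" by (rule tie_on_line_x[OF k_ij])
qed

text \<open>If some \<open>L\<close> grew faster than \<open>Ki\<close> along the line, it would dominate \<open>Ki\<close> far out,
  contradicting the frequent dominance of \<open>Ki\<close>.\<close>
lemma max_weight_rate: "max_weight tau_support (\<lambda>m. \<sigma> * rate m) Ki"
  unfolding max_weight_def
proof (intro conjI ballI Ki_Kj_support)
  fix L assume L: "L \<in> tau_support"
  show "sum (\<lambda>m. \<sigma> * rate m) L \<le> sum (\<lambda>m. \<sigma> * rate m) Ki"
  proof (rule ccontr)
    define d where "d = \<sigma> * (sum rate L - sum rate Ki)"
    define c where "c = phaseS k th0 L (xline 0 0) 0 t - phaseS k th0 Ki (xline 0 0) 0 t"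
    assume "\<not> ?thesis"
    then have "d > 0" unfolding d_def by (simp add: sum_distrib_left[symmetric] algebra_simps)
    have "\<forall>\<^sub>F y in F. - c / d < \<sigma> * y" using scaled unfolding filterlim_at_top_dense by blast
    with frequently_dominant obtain y where yD: "- c / d < \<sigma> * y \<and> (\<exists>x. dominant A k th0 x y t = {Ki, Kj})"
      by (rule frequentlyE[OF frequently_eventually_conj])
    from conjunct2[OF yD] obtain x where D: "dominant A k th0 x y t = {Ki, Kj}" ..
    note y = conjunct1[OF yD]
    have "phaseS k th0 L x y t \<le> phaseS k th0 Ki x y t"
      using Ki_Kj_max_weight_at(1)[OF D] L unfolding max_weight_def phaseS_def by blast
    moreover have "phaseS k th0 L x y t - phaseS k th0 Ki x y t = c + (\<sigma> * y) * d"
    proof -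
      have "(\<sigma> * y) * d = (\<sigma> * \<sigma>) * (y * (sum rate L - sum rate Ki))"
        unfolding d_def by (simp add: algebra_simps)
      then show ?thesis
        unfolding dominant_on_xline[OF D] phaseS_xline[of _ 0 y] c_def using sign by (simp add: algebra_simps)
    qed
    moreover have "- c < (\<sigma> * y) * d" by (rule iffD1[OF pos_divide_less_eq[OF \<open>d > 0\<close>] y])
    ultimately show False by simp
  qed
qed

lemma rate_tie: "a < M \<Longrightarrow> b < M \<Longrightarrow> a \<noteq> b \<Longrightarrow> \<sigma> * rate a = \<sigma> * rate b \<Longrightarrow> {a, b} = {i, j}"
proof (rule ccontr)
  assume ab: "a < M" "b < M" "a \<noteq> b" and eq: "\<sigma> * rate a = \<sigma> * rate b" and "{a, b} \<noteq> {i, j}"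
  have "rate a = rate b" using eq sign by (metis mult.assoc mult.left_neutral mult.commute)
  then have "(k a - k b) * (k a + k b - k i - k j) = 0"
    unfolding rate_def by (simp add: algebra_simps power2_eq_square)
  moreover have "k a \<noteq> k b" using ab by (simp add: k_neq)
  moreover have "k a + k b \<noteq> k i + k j"
    using ab \<open>{a, b} \<noteq> {i, j}\<close> i_lt j_lt i_neq_j by (intro k_sum_neq) simp_all
  ultimately show False by simp
qed

lemma at_most_one_tie_rate: "at_most_one_tie (\<Union>tau_support) (\<lambda>m. \<sigma> * rate m)"
  unfolding at_most_one_tie_def using tau_support_subset rate_tie by (metis UnionE lessThan_iff subsetD)

lemma sum_rate_less:
  assumes L: "L \<in> tau_support" "L \<noteq> Ki" "L \<noteq> Kj"
  shows "\<sigma> * sum rate L < \<sigma> * sum rate Ki"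
proof -
  let ?w = "\<lambda>m. \<sigma> * rate m"
  have Ki_max: "max_weight tau_support ?w Ki" by (rule max_weight_rate)
  then have Kj_max: "max_weight tau_support ?w Kj"
    using Ki_Kj_support sum_rate_Kj unfolding max_weight_def by (simp add: sum_distrib_left[symmetric])
  have "\<not> max_weight tau_support ?w L"
    using max_weight_at_most_two[OF at_most_one_tie_rate Ki_max Kj_max _ Ki_neq_Kj] L(2,3) by blast
  then show ?thesis
    using Ki_max L(1) unfolding max_weight_def by (auto simp: sum_distrib_left[symmetric])
qed

definition pair_terms :: "real \<Rightarrow> real \<Rightarrow> real" where
  "pair_terms s y = coeff A k Ki * exp (phaseS k th0 Ki (xline s y) y t)
                + coeff A k Kj * exp (phaseS k th0 Kj (xline s y) y t)"

lemma pair_terms_eq: "pair_terms s y = exp (y * sum rate Ki) * pair_terms s 0"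
  unfolding pair_terms_def phaseS_xline[of Ki s y] phaseS_xline[of Kj s y] sum_rate_Kj
  by (simp add: exp_add algebra_simps)

lemma pair_terms_pos: "pair_terms s y > 0"
  unfolding pair_terms_def using coeff_pos Ki_Kj_support by (simp add: add_pos_pos)

lemma term_ratio_tendsto:
  assumes L: "L \<in> idx_sets M N"
  shows "((\<lambda>y. coeff A k L * exp (phaseS k th0 L (xline s y) y t) / pair_terms s y) \<longlongrightarrow>
           (if L \<in> {Ki, Kj} then coeff A k L * exp (phaseS k th0 L (xline s 0) 0 t) / pair_terms s 0 else 0)) F"
proof -
  define a where "a = coeff A k L * exp (phaseS k th0 L (xline s 0) 0 t) / pair_terms s 0"
  have ratio: "(\<lambda>y. coeff A k L * exp (phaseS k th0 L (xline s y) y t) / pair_terms s y)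
      = (\<lambda>y. a * exp (y * (sum rate L - sum rate Ki)))"
  proof
    fix y
    show "coeff A k L * exp (phaseS k th0 L (xline s y) y t) / pair_terms s y
        = a * exp (y * (sum rate L - sum rate Ki))"
      unfolding a_def phaseS_xline[of L s y] pair_terms_eq[of s y]
      by (simp add: exp_add exp_diff right_diff_distrib ac_simps)
  qed
  have "((\<lambda>y. a * exp (y * (sum rate L - sum rate Ki))) \<longlongrightarrow> (if L \<in> {Ki, Kj} then a else 0)) F"
  proof (cases "L \<in> {Ki, Kj}")
    case True
    then show ?thesis using sum_rate_Kj by auto
  next
    case notKij: False
    show ?thesis
    proof (cases "L \<in> tau_support")
      case True
      have "\<sigma> * (sum rate L - sum rate Ki) < 0"
        using sum_rate_less[OF True] notKij by (simp add: algebra_simps)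
      from tendsto_mult_right_zero[OF exp_scaled_tendsto_0[OF scaled sign this]]
      show ?thesis using notKij by simp
    next
      case False
      then have "a = 0" unfolding a_def tau_support_def using L by simp
      then show ?thesis by simp
    qed
  qed
  then show ?thesis unfolding ratio a_def[symmetric] .
qed

lemma tau_dx_ratio_tendsto:
  "((\<lambda>y. tau_dx A k th0 n (xline s y) y t / pair_terms s y) \<longlongrightarrow>
     (coeff A k Ki * sum k Ki ^ n * exp (phaseS k th0 Ki (xline s 0) 0 t)
      + coeff A k Kj * sum k Kj ^ n * exp (phaseS k th0 Kj (xline s 0) 0 t)) / pair_terms s 0) F"
proof -
  let ?lim = "\<lambda>L. sum k L ^ n * (if L \<in> {Ki, Kj}
                    then coeff A k L * exp (phaseS k th0 L (xline s 0) 0 t) / pair_terms s 0 else 0)"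
  have "((\<lambda>y. \<Sum>L\<in>idx_sets M N. sum k L ^ n *
            (coeff A k L * exp (phaseS k th0 L (xline s y) y t) / pair_terms s y)) \<longlongrightarrow>
          (\<Sum>L\<in>idx_sets M N. ?lim L)) F"
    by (intro tendsto_sum tendsto_mult_left term_ratio_tendsto)
  moreover have "tau_dx A k th0 n (xline s y) y t / pair_terms s y
      = (\<Sum>L\<in>idx_sets M N. sum k L ^ n *
            (coeff A k L * exp (phaseS k th0 L (xline s y) y t) / pair_terms s y))" for y
    unfolding tau_dx_def dim_A sum_divide_distrib by (simp add: ac_simps)
  moreover have "(\<Sum>L\<in>idx_sets M N. ?lim L) = ?lim Ki + ?lim Kj"
  proof -
    have "{Ki, Kj} \<subseteq> idx_sets M N" using Ki_Kj_support unfolding tau_support_def by blast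
    then have "(\<Sum>L\<in>idx_sets M N. ?lim L) = (\<Sum>L\<in>{Ki, Kj}. ?lim L)"
      using finite_idx_sets by (intro sum.mono_neutral_right) auto
    then show ?thesis using Ki_neq_Kj by simp
  qed
  ultimately show ?thesis by (simp add: add_divide_distrib ac_simps)
qed

lemma tau_pair_terms_tendsto: "((\<lambda>y. tau A k th0 (xline s y) y t / pair_terms s y) \<longlongrightarrow> 1) F"
proof -
  have "((\<lambda>y. tau_dx A k th0 0 (xline s y) y t / pair_terms s y) \<longlongrightarrow> pair_terms s 0 / pair_terms s 0) F"
    using tau_dx_ratio_tendsto[of 0 s] unfolding pair_terms_def by simp
  then show ?thesis using pair_terms_pos[of s 0] by (simp add: tau_dx_0)
qed

lemma ln_pair_terms_ratio:
  "ln ((coeff A k Ki * exp (phaseS k th0 Ki (xline s 0) 0 t))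
       / (coeff A k Kj * exp (phaseS k th0 Kj (xline s 0) 0 t)))
   = s + ln (coeff A k Ki / coeff A k Kj)"
proof -
  have "(coeff A k Ki * exp (phaseS k th0 Ki (xline s 0) 0 t))
          / (coeff A k Kj * exp (phaseS k th0 Kj (xline s 0) 0 t))
      = exp (phaseS k th0 Ki (xline s 0) 0 t - phaseS k th0 Kj (xline s 0) 0 t)
          * (coeff A k Ki / coeff A k Kj)"
    by (simp add: exp_diff ac_simps)
  also have "\<dots> = exp s * (coeff A k Ki / coeff A k Kj)" unfolding phaseS_diff_xline ..
  finally have "(coeff A k Ki * exp (phaseS k th0 Ki (xline s 0) 0 t))
      / (coeff A k Kj * exp (phaseS k th0 Kj (xline s 0) 0 t)) = exp s * (coeff A k Ki / coeff A k Kj)" .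
  moreover have "coeff A k Ki / coeff A k Kj > 0" using coeff_pos Ki_Kj_support by simp
  ultimately show ?thesis using ln_mult_pos[OF exp_gt_zero] by (simp only: ln_exp)
qed

lemma kp_u_tendsto_sech:
  "((\<lambda>y. kp_u A k th0 (xline s y) y t) \<longlongrightarrow>
     (1/2) * (k i - k j)^2 / (cosh ((1/2) * (s + ln (coeff A k Ki / coeff A k Kj))))^2) F"
proof -
  define r1 where "r1 = coeff A k Ki * exp (phaseS k th0 Ki (xline s 0) 0 t)"
  define r2 where "r2 = coeff A k Kj * exp (phaseS k th0 Kj (xline s 0) 0 t)"
  have r_pos: "r1 > 0" "r2 > 0" unfolding r1_def r2_def using coeff_pos Ki_Kj_support by simp_all
  let ?R = "\<lambda>n y. tau_dx A k th0 n (xline s y) y t / pair_terms s y"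
  let ?P = "\<lambda>n. (r1 * sum k Ki ^ n + r2 * sum k Kj ^ n) / (r1 + r2)"
  have R_lim: "(?R n \<longlongrightarrow> ?P n) F" for n
    using tau_dx_ratio_tendsto[of n s] unfolding pair_terms_def r1_def r2_def by (simp add: ac_simps)
  have P0: "?P 0 = 1" using r_pos by simp
  have kp_u_ratios: "(\<lambda>y. kp_u A k th0 (xline s y) y t) = (\<lambda>y. 2 * (?R 2 y / ?R 0 y - (?R 1 y / ?R 0 y)^2))"
  proof
    fix y
    have "pair_terms s y \<noteq> 0" using pair_terms_pos[of s y] by simp
    then show "kp_u A k th0 (xline s y) y t = 2 * (?R 2 y / ?R 0 y - (?R 1 y / ?R 0 y)^2)"
      unfolding kp_u_eq_tau_dx[OF tau_pos] by simp
  qed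
  have lim: "((\<lambda>y. 2 * (?R 2 y / ?R 0 y - (?R 1 y / ?R 0 y)^2)) \<longlongrightarrow>
      2 * (?P 2 / ?P 0 - (?P 1 / ?P 0)^2)) F"
    using P0 by (intro tendsto_intros R_lim) simp_all
  have sum_k_diff: "sum k Ki - sum k Kj = k i - k j" unfolding sum_Ki sum_Kj by simp
  have ln_ratio: "ln (r1 / r2) = s + ln (coeff A k Ki / coeff A k Kj)"
    unfolding r1_def r2_def by (rule ln_pair_terms_ratio)
  have "2 * (?P 2 / ?P 0 - (?P 1 / ?P 0)^2)
      = 2 * ((r1 * sum k Ki ^ 2 + r2 * sum k Kj ^ 2) / (r1 + r2)
             - ((r1 * sum k Ki + r2 * sum k Kj) / (r1 + r2))^2)"
    by (simp only: P0 div_by_1 power_one_right)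
  also have "\<dots> = (1/2) * (sum k Ki - sum k Kj)^2 / (cosh ((1/2) * ln (r1 / r2)))^2"
    by (rule two_exp_mix_sech_sq[OF r_pos])
  also have "\<dots> = (1/2) * (k i - k j)^2 / (cosh ((1/2) * (s + ln (coeff A k Ki / coeff A k Kj))))^2"
    by (simp only: sum_k_diff ln_ratio)
  finally have limit_value: "2 * (?P 2 / ?P 0 - (?P 1 / ?P 0)^2)
      = (1/2) * (k i - k j)^2 / (cosh ((1/2) * (s + ln (coeff A k Ki / coeff A k Kj))))^2" .
  show ?thesis using lim unfolding kp_u_ratios limit_value .
qed

end

context kp_setting
begin

lemma line_soliton_asymptotics:
  assumes "filterlim (\<lambda>y. \<sigma> * y) at_top F" "\<sigma> * \<sigma> = 1"
    and "i < M" "j < M" "i \<noteq> j" "i \<notin> K" "j \<notin> K" "insert i K \<in> idx_sets M N"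
    and "\<exists>\<^sub>F y in F. \<exists>x. dominant A k th0 x y t = {insert i K, insert j K}"
  shows "((\<lambda>y. tau A k th0 (line_x k th0 i j s y t) y t /
            (coeff A k (insert i K) * exp (phaseS k th0 (insert i K) (line_x k th0 i j s y t) y t)
             + coeff A k (insert j K) * exp (phaseS k th0 (insert j K) (line_x k th0 i j s y t) y t)))
          \<longlongrightarrow> 1) F"
    and "((\<lambda>y. kp_u A k th0 (line_x k th0 i j s y t) y t) \<longlongrightarrow>
           (1/2) * (k i - k j)^2 / (cosh ((1/2) * (s + ln (coeff A k (insert i K) / coeff A k (insert j K)))))^2) F"
proof -
  interpret soliton_line N M k th0 A t \<sigma> F K i j
    by (rule soliton_line.intro[OF kp_setting_axioms soliton_line_axioms.intro]) (fact assms)+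
  show "((\<lambda>y. tau A k th0 (line_x k th0 i j s y t) y t /
            (coeff A k (insert i K) * exp (phaseS k th0 (insert i K) (line_x k th0 i j s y t) y t)
             + coeff A k (insert j K) * exp (phaseS k th0 (insert j K) (line_x k th0 i j s y t) y t)))
          \<longlongrightarrow> 1) F"
    using tau_pair_terms_tendsto unfolding pair_terms_def .
  show "((\<lambda>y. kp_u A k th0 (line_x k th0 i j s y t) y t) \<longlongrightarrow>
           (1/2) * (k i - k j)^2 / (cosh ((1/2) * (s + ln (coeff A k (insert i K) / coeff A k (insert j K)))))^2) F"
    by (rule kp_u_tendsto_sech)
qed

end

theorem proposition1:
  fixes N M :: nat and k th0 :: "nat \<Rightarrow> real" and A :: "real mat" and t :: real
  assumes N1: "N \<ge> 1" and MN: "M > N"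
    and k_incr: "\<And>a b. a < b \<Longrightarrow> b < M \<Longrightarrow> k a < k b"
    and k_generic: "\<And>a b c d. a < M \<Longrightarrow> b < M \<Longrightarrow> c < M \<Longrightarrow> d < M \<Longrightarrow> a < b \<Longrightarrow> c < d
                      \<Longrightarrow> (a, b) \<noteq> (c, d) \<Longrightarrow> k a + k b \<noteq> k c + k d"
    and A_dim: "A \<in> carrier_mat N M"
    and A_rank: "vec_space.rank N A = N"
    and A_pos: "\<And>I. I \<in> idx_sets M N \<Longrightarrow> col_minor A I \<noteq> 0 \<Longrightarrow> col_minor A I > 0"
  shows
    "\<forall>F \<in> {at_top, at_bot}.
       (\<forall>\<^sub>F y in F. \<forall>x.
          card (dominant A k th0 x y t) = 1 \<or>
          (\<exists>K i j. i \<noteq> j \<and> i \<notin> K \<and> j \<notin> K \<and>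
             dominant A k th0 x y t = {insert i K, insert j K} \<and>
             phase k th0 i x y t = phase k th0 j x y t))
       \<and>
       (\<forall>K i j. i < M \<and> j < M \<and> i \<noteq> j \<and> i \<notin> K \<and> j \<notin> K \<and> insert i K \<in> idx_sets M N \<and>
          (\<exists>\<^sub>F y in F. \<exists>x. dominant A k th0 x y t = {insert i K, insert j K}) \<longrightarrow>
          (\<forall>s.
             ((\<lambda>y. tau A k th0 (line_x k th0 i j s y t) y t /
                   (coeff A k (insert i K) * exp (phaseS k th0 (insert i K) (line_x k th0 i j s y t) y t)
                    + coeff A k (insert j K) * exp (phaseS k th0 (insert j K) (line_x k th0 i j s y t) y t)))
               \<longlongrightarrow> 1) F
           \<and> ((\<lambda>y. kp_u A k th0 (line_x k th0 i j s y t) y t)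
               \<longlongrightarrow> (1/2) * (k i - k j)^2 /
                   (cosh ((1/2) * (s + ln (coeff A k (insert i K) / coeff A k (insert j K)))))^2) F)
          \<and> (let lx = k i - k j; ly = (k i)^2 - (k j)^2; \<omega> = (k i)^3 - (k j)^3
             in -4 * \<omega> * lx + lx^4 + 3 * ly^2 = 0))"
proof -
  interpret kp_setting N M k th0 A t
    by (rule kp_setting.intro) (fact k_incr k_generic A_dim A_rank A_pos)+
  show ?thesis
    apply (intro ballI conjI allI impI)
    subgoal for F
      by (elim scaled_at_top_or_at_bot)
        (rule eventually_dominant_single_or_swap, erule eventually_ne_if_scaled_at_top)
    subgoal for F K i j s
      by (elim scaled_at_top_or_at_bot conjE) (rule line_soliton_asymptotics(1); assumption)
    subgoal for F K i j s
      by (elim scaled_at_top_or_at_bot conjE) (rule line_soliton_asymptotics(2); assumption)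
    subgoal for F K i j
      by (rule dispersion_relation)
    done
qed

end
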